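(* 3D version. Let the environment be a finite union of pairwise disjoint smooth surfaces in $\mathbb{R}^3$ whose principal curvatures are bounded in absolute value by $\kappa\ge0$. Let $a_1,\dots,a_N$ be distinct points on these surfaces, and let $n_i$ be a unit normal to the surface at $a_i$. For $x=(x_R,x_T)\in\mathbb{R}^3\times\mathbb{R}^3$, let $d_i(x):=x_R\times a_i+x_T$ (cross product). Let $\pi(x,i)$ be an index $j$ minimizing $\|a_i+d_i(x)-a_j\|$; note $\pi(0,i)=i$. Fix $x$ and $i$, and let $j=\pi(x,i)$. Assume the following: - $a_i$ and $a_j$ lie on the same surface $S$; - the intersection of $S$ with the plane through $a_i$ spanned by $n_i$ and $a_j-a_i$ contains a $C^2$ arc-length-parametrized curve $\gamma$ with $a_i=\gamma(s_i)$ and $a_j=\gamma(s_j)$; - $\kappa\,|s_i-s_j|\le1$. Then $\psi_i:=(a_i-a_j)\cdot n_i$ satisfies $$(a_i+d_i(x)-a_{\pi(x,i)})\cdot n_i=d_i(x)\cdot n_i+\psi_i,\qquad |\psi_i|\le 8\kappa\|d_i(x)\|^2 .$$ Consequently, suppose these hypotheses hold for every $i$. Then the point-to-plane ICP cost $J_{\mathrm{ICP}}(x):=\sum_i[(a_i+d_i(x)-a_{\pi(x,i)})\cdot n_i]^2$ and the frozen-matching quadratic cost $J_{\mathrm{fix}}(x):=\sum_i(d_i(x)\cdot n_i)^2$ satisfy $$|J_{\mathrm{ICP}}(x)-J_{\mathrm{fix}}(x)|\le\sum_i\big(16\kappa\|d_i(x)\|^3+64\kappa^2\|d_i(x)\|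^4\big)=O(\kappa\|x\|^3).$$
   Context: The cost $J_{\mathrm{fix}}$ is the point-to-plane ICP cost with matching held fixed at its value $\pi(0,\cdot)$ at the minimum $x=0$. It is a quadratic form in $x$, equal to its own second-order Taylor expansion at $0$. "Principal curvatures" refers to the (Gauss) principal curvatures of the surface. *)

theory Defs
  imports "HOL-Analysis.Analysis"
begin

fun Ck_on :: "nat \<Rightarrow> ('a::euclidean_space \<Rightarrow> real) \<Rightarrow> 'a set \<Rightarrow> bool" where
  "Ck_on 0 f U = continuous_on U f"
| "Ck_on (Suc k) f U =
     (\<exists>f'. (\<forall>y\<in>U. (f has_derivative f' y) (at y)) \<and> (\<forall>v. Ck_on k (\<lambda>y. f' y v) U))"

definition smooth_on :: "('a::euclidean_space \<Rightarrow> real) \<Rightarrow> 'a set \<Rightarrow> bool" where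
  "smooth_on f U \<longleftrightarrow> (\<forall>k. Ck_on k f U)"

definition local_defining ::
  "(real^3) set \<Rightarrow> real^3 \<Rightarrow> (real^3) set \<Rightarrow> (real^3 \<Rightarrow> real) \<Rightarrow> (real^3 \<Rightarrow> real^3) \<Rightarrow> bool" where
  "local_defining S p U F G \<longleftrightarrow>
     open U \<and> p \<in> U \<and> smooth_on F U \<and>
     (\<forall>y\<in>U. (F has_derivative (\<lambda>v. G y \<bullet> v)) (at y) \<and> G y \<noteq> 0) \<and>
     S \<inter> U = {y\<in>U. F y = 0}"

definition smooth_surface :: "(real^3) set \<Rightarrow> bool" where
  "smooth_surface S \<longleftrightarrow> (\<forall>p\<in>S. \<exists>U F G. local_defining S p U F G)"

definition unit_normal :: "(real^3) set \<Rightarrow> real^3 \<Rightarrow> real^3 \<Rightarrow> bool" where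
  "unit_normal S p nv \<longleftrightarrow> p \<in> S \<and> norm nv = 1 \<and>
     (\<exists>U F G. local_defining S p U F G \<and> (\<forall>v. G p \<bullet> v = 0 \<longrightarrow> nv \<bullet> v = 0))"

text \<open>Principal curvatures at p: eigenvalues of the shape operator, i.e. of the
  differential of the Gauss map N = G / |G| restricted to the tangent plane
  (shape operator = - dN).\<close>

definition principal_curvature :: "(real^3 \<Rightarrow> real^3) \<Rightarrow> real^3 \<Rightarrow> real \<Rightarrow> bool" where
  "principal_curvature G p k \<longleftrightarrow>
     (\<exists>DN v. ((\<lambda>y. (1 / norm (G y)) *\<^sub>R G y) has_derivative DN) (at p) \<and>
            v \<noteq> 0 \<and> G p \<bullet> v = 0 \<and> DN v = - (k *\<^sub>R v))"

definition curvature_bounded :: "(real^3) set \<Rightarrow> real \<Rightarrow> bool" where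
  "curvature_bounded S \<kappa> \<longleftrightarrow>
     (\<forall>p\<in>S. \<forall>U F G k. local_defining S p U F G \<longrightarrow> principal_curvature G p k \<longrightarrow> \<bar>k\<bar> \<le> \<kappa>)"

definition icp_d :: "(real^3) \<times> (real^3) \<Rightarrow> real^3 \<Rightarrow> real^3" where
  "icp_d x p = cross3 (fst x) p + snd x"

definition arc_hyp :: "(real^3) set \<Rightarrow> real \<Rightarrow> real^3 \<Rightarrow> real^3 \<Rightarrow> real^3 \<Rightarrow> bool" where
  "arc_hyp S \<kappa> p q nv \<longleftrightarrow>
     (\<exists>(\<gamma>::real \<Rightarrow> real^3) \<gamma>' \<gamma>'' si sj.
        (let I = {min si sj .. max si sj} in
          (\<forall>t\<in>I. (\<gamma> has_vector_derivative \<gamma>' t) (at t within I) \<and>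
                  (\<gamma>' has_vector_derivative \<gamma>'' t) (at t within I) \<and>
                  norm (\<gamma>' t) = 1) \<and>
          continuous_on I \<gamma>'' \<and>
          \<gamma> ` I \<subseteq> S \<inter> {p + u *\<^sub>R nv + w *\<^sub>R (q - p) | u w. True}) \<and>
        \<gamma> si = p \<and> \<gamma> sj = q \<and> \<kappa> * \<bar>si - sj\<bar> \<le> 1)"

definition J_ICP :: "nat \<Rightarrow> (nat \<Rightarrow> real^3) \<Rightarrow> (nat \<Rightarrow> real^3) \<Rightarrow>
    ((real^3) \<times> (real^3) \<Rightarrow> nat \<Rightarrow> nat) \<Rightarrow> (real^3) \<times> (real^3) \<Rightarrow> real" where
  "J_ICP N a n \<pi> x = (\<Sum>i=1..N. ((a i + icp_d x (a i) - a (\<pi> x i)) \<bullet> n i)\<^sup>2)"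

definition J_fix :: "nat \<Rightarrow> (nat \<Rightarrow> real^3) \<Rightarrow> (nat \<Rightarrow> real^3) \<Rightarrow> (real^3) \<times> (real^3) \<Rightarrow> real" where
  "J_fix N a n x = (\<Sum>i=1..N. (icp_d x (a i) \<bullet> n i)\<^sup>2)"

end

theory Submission
  imports Defs
begin

text \<open>The identity for \<open>(a\<^sub>i + d\<^sub>i - a\<^sub>j) \<bullet> n\<^sub>i\<close> is linear algebra; the content is the bound on
  \<open>\<psi>\<^sub>i = (a\<^sub>i - a\<^sub>j) \<bullet> n\<^sub>i\<close>. The differential of the Gauss map is the shape operator, a self-adjoint map
  of the tangent plane with eigenvalues bounded by \<open>\<kappa>\<close>, so along the arc \<open>\<gamma>\<close> from \<open>a\<^sub>i\<close> to \<open>a\<^sub>j\<close> the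
  unit normals move at speed at most \<open>\<kappa>\<close> and \<open>\<bar>\<gamma>' t \<bullet> n\<^sub>i\<bar> \<le> \<kappa> \<bar>t - s\<^sub>i\<bar>\<close>. Integrating gives
  \<open>\<bar>\<psi>\<^sub>i\<bar> \<le> \<kappa> L\<^sup>2 / 2\<close> for the arc length \<open>L\<close>. Because the arc is planar, the same estimate gives
  \<open>\<gamma>' t \<bullet> \<gamma>' s\<^sub>i \<ge> 1 - \<kappa> \<bar>t - s\<^sub>i\<bar>\<close>, so with \<open>\<kappa> L \<le> 1\<close> the chord is at least \<open>L / 2\<close>. As \<open>a\<^sub>j\<close> is the
  data point nearest to \<open>a\<^sub>i + d\<^sub>i\<close>, \<open>\<bar>a\<^sub>i - a\<^sub>j\<bar> \<le> 2 \<bar>d\<^sub>i\<bar>\<close>, whence \<open>\<bar>\<psi>\<^sub>i\<bar> \<le> 8 \<kappa> \<bar>d\<^sub>i\<bar>\<^sup>2\<close>. The cost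
  estimate then follows from \<open>\<bar>(u + \<psi>)\<^sup>2 - u\<^sup>2\<bar> \<le> 2 \<bar>u\<bar> \<bar>\<psi>\<bar> + \<psi>\<^sup>2\<close> with \<open>u = d\<^sub>i \<bullet> n\<^sub>i\<close>.\<close>

unbundle cross3_syntax

section \<open>Linear algebra in three dimensions\<close>

lemma orthonormal_frame_expansion:
  fixes n e w :: "real^3"
  assumes "norm n = 1" "norm e = 1" "n \<bullet> e = 0"
  shows "w = (w \<bullet> n) *\<^sub>R n + (w \<bullet> e) *\<^sub>R e + (w \<bullet> (n \<times> e)) *\<^sub>R (n \<times> e)"
proof -
  let ?c = "n \<times> e"
  have nn: "n \<bullet> n = 1" and ee: "e \<bullet> e = 1" using assms by (simp_all add: dot_square_norm)
  have "(norm ?c)\<^sup>2 = 1" using norm_cross_dot[of n e] assms by simp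
  then have cc: "?c \<bullet> ?c = 1" by (simp add: dot_square_norm)
  define r where "r = w - (w \<bullet> n) *\<^sub>R n - (w \<bullet> e) *\<^sub>R e"
  have rn: "r \<bullet> n = 0" and re: "r \<bullet> e = 0"
    unfolding r_def using nn ee assms(3) by (simp_all add: inner_diff_left inner_diff_right inner_commute)
  have "r = (w \<bullet> ?c) *\<^sub>R ?c"
  proof (rule cross_dot_cancel[of ?c])
    show "?c \<noteq> 0" using cc by auto
    show "?c \<bullet> r = ?c \<bullet> ((w \<bullet> ?c) *\<^sub>R ?c)"
      using cc by (simp add: r_def inner_diff_right dot_cross_self inner_commute)
    have "r \<times> ?c = 0" using Lagrange[of r n e] rn re by (simp add: inner_commute)
    then show "?c \<times> r = ?c \<times> ((w \<bullet> ?c) *\<^sub>R ?c)"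
      using cross_skew[of ?c r] by (simp add: cross_mult_right)
  qed
  then show ?thesis unfolding r_def by (simp add: algebra_simps)
qed

lemma norm_sq_orthonormal_frame:
  fixes n e w :: "real^3"
  assumes "norm n = 1" "norm e = 1" "n \<bullet> e = 0"
  shows "(norm w)\<^sup>2 = (w \<bullet> n)\<^sup>2 + (w \<bullet> e)\<^sup>2 + (w \<bullet> (n \<times> e))\<^sup>2"
proof -
  have "w \<bullet> w = w \<bullet> ((w \<bullet> n) *\<^sub>R n + (w \<bullet> e) *\<^sub>R e + (w \<bullet> (n \<times> e)) *\<^sub>R (n \<times> e))"
    using orthonormal_frame_expansion[OF assms, of w] by simp
  then show ?thesis unfolding power2_norm_eq_inner by (simp add: inner_add_right power2_eq_square)
qed

lemma exists_unit_orthogonal: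
  fixes g :: "real^3"
  assumes "g \<noteq> 0"
  obtains t where "norm t = 1" "g \<bullet> t = 0"
proof -
  have "g \<times> axis 1 1 \<noteq> 0 \<or> g \<times> axis 2 1 \<noteq> 0"
  proof (rule ccontr)
    assume "\<not> ?thesis"
    then have "(g \<times> axis 1 1) $ 2 = 0" "(g \<times> axis 1 1) $ 3 = 0" "(g \<times> axis 2 1) $ 3 = 0"
      by simp_all
    then have "g $ 1 = 0" "g $ 2 = 0" "g $ 3 = 0" by (simp_all add: cross_components axis_def)
    then show False using assms by (simp add: vec_eq_iff forall_3)
  qed
  then obtain u where u: "u \<noteq> 0" "g \<bullet> u = 0" using dot_cross_self(1) by blast
  show ?thesis by (rule that[of "sgn u"]) (use u in \<open>auto simp: norm_sgn sgn_div_norm\<close>)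
qed

lemma sgn_eq_or_neg_if_cross_eq_0:
  fixes x y :: "real^3"
  assumes "x \<times> y = 0" "x \<noteq> 0" "y \<noteq> 0"
  shows "sgn x = sgn y \<or> sgn x = - sgn y"
proof -
  have nx: "norm (sgn x) = 1" "norm (sgn y) = 1" using assms by (simp_all add: norm_sgn)
  have cr: "sgn y \<times> sgn x = 0" using assms(1) cross_skew[of x y]
    by (simp add: sgn_div_norm cross_mult_left cross_mult_right)
  have eq: "sgn x = (sgn x \<bullet> sgn y) *\<^sub>R sgn y"
  proof (rule cross_dot_cancel[of "sgn y"])
    show "sgn y \<noteq> 0" using assms by (simp add: sgn_zero_iff)
    show "sgn y \<bullet> sgn x = sgn y \<bullet> ((sgn x \<bullet> sgn y) *\<^sub>R sgn y)"
      using nx by (simp add: inner_commute dot_square_norm)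
    show "sgn y \<times> sgn x = sgn y \<times> ((sgn x \<bullet> sgn y) *\<^sub>R sgn y)" using cr by (simp add: cross_mult_right)
  qed
  have "(sgn x \<bullet> sgn y)\<^sup>2 = 1" using norm_cross_dot[of "sgn x" "sgn y"] nx cr cross_skew[of "sgn x"] by simp
  then have "sgn x \<bullet> sgn y = 1 \<or> sgn x \<bullet> sgn y = -1" by (simp add: power2_eq_1_iff)
  then show ?thesis using eq by auto
qed

text \<open>The eigenvalues \<open>m \<plusminus> r\<close> of the symmetric matrix with rows \<open>(\<alpha>, \<beta>)\<close>, \<open>(\<beta>, \<gamma>)\<close>
  are the roots of \<open>(\<mu> - \<alpha>) (\<mu> - \<gamma>) = \<beta>\<^sup>2\<close>; the norm of the image of \<open>(x, y)\<close> is
  controlled by \<open>(\<bar>m\<bar> + r)\<^sup>2 = max (m + r)\<^sup>2 (m - r)\<^sup>2\<close>.\<close>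

lemma symmetric_2x2_image_bound:
  fixes \<alpha> \<beta> \<gamma> K x y :: real
  assumes eig: "\<And>\<mu>. (\<mu> - \<alpha>) * (\<mu> - \<gamma>) = \<beta>\<^sup>2 \<Longrightarrow> \<bar>\<mu>\<bar> \<le> K"
  shows "0 \<le> K" and "(x * \<alpha> + y * \<beta>)\<^sup>2 + (x * \<beta> + y * \<gamma>)\<^sup>2 \<le> K\<^sup>2 * (x\<^sup>2 + y\<^sup>2)"
proof -
  define d where "d = (\<alpha> - \<gamma>) / 2"
  define m where "m = (\<alpha> + \<gamma>) / 2"
  define r where "r = sqrt (d\<^sup>2 + \<beta>\<^sup>2)"
  have r0: "r \<ge> 0" and rsq: "r\<^sup>2 = d\<^sup>2 + \<beta>\<^sup>2" by (simp_all add: r_def)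
  have roots: "(m + r) - \<alpha> = r - d" "(m + r) - \<gamma> = r + d" "(m - r) - \<alpha> = - (r + d)" "(m - r) - \<gamma> = d - r"
    by (simp_all add: m_def d_def field_simps)
  have "((m + r) - \<alpha>) * ((m + r) - \<gamma>) = \<beta>\<^sup>2" "((m - r) - \<alpha>) * ((m - r) - \<gamma>) = \<beta>\<^sup>2"
    unfolding roots using rsq by (simp_all add: power2_eq_square algebra_simps)
  then have "\<bar>m + r\<bar> \<le> K" "\<bar>m - r\<bar> \<le> K" using eig by blast+
  then have K: "\<bar>m\<bar> + r \<le> K" by linarith
  then show "0 \<le> K" using r0 by linarith
  have id: "(x * \<alpha> + y * \<beta>)\<^sup>2 + (x * \<beta> + y * \<gamma>)\<^sup>2
      = (m\<^sup>2 + r\<^sup>2) * (x\<^sup>2 + y\<^sup>2) + 2 * m * (d * (x\<^sup>2 - y\<^sup>2) + 2 * \<beta> * x * y)"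
    unfolding rsq m_def d_def by (simp add: power2_eq_square field_simps)
  \<comment> \<open>Cauchy--Schwarz for \<open>(d, \<beta>)\<close> and \<open>(x\<^sup>2 - y\<^sup>2, 2 x y)\<close>, whose norm is \<open>x\<^sup>2 + y\<^sup>2\<close>\<close>
  have "(d * (x\<^sup>2 - y\<^sup>2) + 2 * \<beta> * x * y)\<^sup>2 + (2 * d * x * y - \<beta> * (x\<^sup>2 - y\<^sup>2))\<^sup>2
      = (d\<^sup>2 + \<beta>\<^sup>2) * ((x\<^sup>2 - y\<^sup>2)\<^sup>2 + (2 * x * y)\<^sup>2)"
    by (simp add: power2_eq_square algebra_simps)
  also have "\<dots> = (r * (x\<^sup>2 + y\<^sup>2))\<^sup>2"
    unfolding power_mult_distrib rsq[symmetric] by (simp add: power2_eq_square algebra_simps)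
  finally have "(d * (x\<^sup>2 - y\<^sup>2) + 2 * \<beta> * x * y)\<^sup>2 \<le> (r * (x\<^sup>2 + y\<^sup>2))\<^sup>2"
    by (metis le_add_same_cancel1 zero_le_power2)
  then have cs: "\<bar>d * (x\<^sup>2 - y\<^sup>2) + 2 * \<beta> * x * y\<bar> \<le> r * (x\<^sup>2 + y\<^sup>2)"
    using r0 by (metis power2_abs power2_le_imp_le add_nonneg_nonneg mult_nonneg_nonneg zero_le_power2)
  have "m * (d * (x\<^sup>2 - y\<^sup>2) + 2 * \<beta> * x * y) \<le> \<bar>m\<bar> * (r * (x\<^sup>2 + y\<^sup>2))"
    using mult_left_mono[OF cs abs_ge_zero[of m]] by (simp add: abs_mult[symmetric])
  then have "(x * \<alpha> + y * \<beta>)\<^sup>2 + (x * \<beta> + y * \<gamma>)\<^sup>2 \<le> (\<bar>m\<bar> + r)\<^sup>2 * (x\<^sup>2 + y\<^sup>2)"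
    unfolding id by (simp add: power2_eq_square algebra_simps)
  also have "\<dots> \<le> K\<^sup>2 * (x\<^sup>2 + y\<^sup>2)"
    using K r0 by (intro mult_right_mono power_mono) auto
  finally show "(x * \<alpha> + y * \<beta>)\<^sup>2 + (x * \<beta> + y * \<gamma>)\<^sup>2 \<le> K\<^sup>2 * (x\<^sup>2 + y\<^sup>2)" .
qed

lemma orthonormal_basis_of_plane:
  fixes g :: "real^3"
  assumes g: "g \<noteq> 0"
  obtains t1 t2 where "g \<bullet> t1 = 0" "g \<bullet> t2 = 0"
    "\<And>x y. (norm (x *\<^sub>R t1 + y *\<^sub>R t2))\<^sup>2 = x\<^sup>2 + y\<^sup>2"
    "\<And>w. g \<bullet> w = 0 \<Longrightarrow> w = (w \<bullet> t1) *\<^sub>R t1 + (w \<bullet> t2) *\<^sub>R t2"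
proof -
  obtain t1 where t1: "norm t1 = 1" "sgn g \<bullet> t1 = 0"
    using exists_unit_orthogonal[OF g] by (auto simp: sgn_div_norm)
  define t2 where "t2 = sgn g \<times> t1"
  have ng: "norm (sgn g) = 1" using g by (simp add: norm_sgn)
  have g_orth_iff: "g \<bullet> w = 0 \<longleftrightarrow> sgn g \<bullet> w = 0" for w
    using g by (simp add: sgn_div_norm)
  have gt: "g \<bullet> t1 = 0" "g \<bullet> t2 = 0" "t1 \<bullet> t2 = 0"
    unfolding g_orth_iff using t1 by (simp_all add: t2_def dot_cross_self)
  have "(norm t2)\<^sup>2 = 1" using norm_cross_dot[of "sgn g" t1] t1 ng by (simp add: t2_def)
  then have "t1 \<bullet> t1 = 1" "t2 \<bullet> t2 = 1" using t1 by (simp_all add: dot_square_norm)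
  then have "(norm (x *\<^sub>R t1 + y *\<^sub>R t2))\<^sup>2 = x\<^sup>2 + y\<^sup>2" for x y
    unfolding power2_norm_eq_inner
    using gt by (simp add: inner_add_left inner_add_right inner_commute power2_eq_square)
  moreover have "w = (w \<bullet> t1) *\<^sub>R t1 + (w \<bullet> t2) *\<^sub>R t2" if "g \<bullet> w = 0" for w
    using orthonormal_frame_expansion[OF ng t1, of w] that
    by (simp add: t2_def g_orth_iff inner_commute)
  ultimately show ?thesis using that gt by blast
qed

text \<open>In an orthonormal basis of the plane \<open>A\<close> is a symmetric \<open>2 \<times> 2\<close> matrix, and its two
  eigenvalues have eigenvectors in the plane.\<close>

lemma self_adjoint_on_plane_norm_bound:
  fixes g :: "real^3" and A :: "real^3 \<Rightarrow> real^3"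
  assumes g: "g \<noteq> 0" and lin: "linear A"
    and inv: "\<And>v. g \<bullet> v = 0 \<Longrightarrow> g \<bullet> A v = 0"
    and sym: "\<And>v w. g \<bullet> v = 0 \<Longrightarrow> g \<bullet> w = 0 \<Longrightarrow> A v \<bullet> w = A w \<bullet> v"
    and eig: "\<And>v k. v \<noteq> 0 \<Longrightarrow> g \<bullet> v = 0 \<Longrightarrow> A v = k *\<^sub>R v \<Longrightarrow> \<bar>k\<bar> \<le> K"
    and v: "g \<bullet> v = 0"
  shows "norm (A v) \<le> K * norm v"
proof -
  obtain t1 t2 where gt: "g \<bullet> t1 = 0" "g \<bullet> t2 = 0"
    and norm_sq: "\<And>x y. (norm (x *\<^sub>R t1 + y *\<^sub>R t2))\<^sup>2 = x\<^sup>2 + y\<^sup>2"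
    and expand: "\<And>w. g \<bullet> w = 0 \<Longrightarrow> w = (w \<bullet> t1) *\<^sub>R t1 + (w \<bullet> t2) *\<^sub>R t2"
    using orthonormal_basis_of_plane[OF g] by blast
  have "t1 \<noteq> 0" "t2 \<noteq> 0" using norm_sq[of 1 0] norm_sq[of 0 1] by auto
  define \<alpha> \<beta> \<gamma> where "\<alpha> = A t1 \<bullet> t1" and "\<beta> = A t1 \<bullet> t2" and "\<gamma> = A t2 \<bullet> t2"
  have At1: "A t1 = \<alpha> *\<^sub>R t1 + \<beta> *\<^sub>R t2"
    using expand[OF inv[OF gt(1)]] by (simp add: \<alpha>_def \<beta>_def \<gamma>_def)
  have At2: "A t2 = \<beta> *\<^sub>R t1 + \<gamma> *\<^sub>R t2"
    using expand[OF inv[OF gt(2)]] sym[OF gt(2,1)] by (simp add: \<alpha>_def \<beta>_def \<gamma>_def)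
  have A_coords: "A (x *\<^sub>R t1 + y *\<^sub>R t2) = (x * \<alpha> + y * \<beta>) *\<^sub>R t1 + (x * \<beta> + y * \<gamma>) *\<^sub>R t2" for x y
    using At1 At2 by (simp add: linear_add[OF lin] linear_scale[OF lin] algebra_simps)
  have tangent: "g \<bullet> (x *\<^sub>R t1 + y *\<^sub>R t2) = 0" for x y
    using gt by (simp add: inner_add_right)
  have roots_bounded: "\<bar>\<mu>\<bar> \<le> K" if root: "(\<mu> - \<alpha>) * (\<mu> - \<gamma>) = \<beta>\<^sup>2" for \<mu>
  proof (cases "\<beta> = 0")
    case True
    then have "\<mu> = \<alpha> \<or> \<mu> = \<gamma>" using root by simp
    then show ?thesis
      using eig[of t1 \<mu>] eig[of t2 \<mu>] \<open>t1 \<noteq> 0\<close> \<open>t2 \<noteq> 0\<close> gt At1 At2 True by fastforce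
  next
    case False
    let ?v = "\<beta> *\<^sub>R t1 + (\<mu> - \<alpha>) *\<^sub>R t2"
    have "?v \<noteq> 0" using norm_sq[of \<beta> "\<mu> - \<alpha>"] False by auto
    moreover have "A ?v = \<mu> *\<^sub>R ?v"
    proof -
      have "A ?v = (\<beta> * \<alpha> + (\<mu> - \<alpha>) * \<beta>) *\<^sub>R t1 + (\<beta> * \<beta> + (\<mu> - \<alpha>) * \<gamma>) *\<^sub>R t2"
        by (rule A_coords)
      also have "\<beta> * \<beta> + (\<mu> - \<alpha>) * \<gamma> = \<mu> * (\<mu> - \<alpha>)"
        using root by (simp add: power2_eq_square algebra_simps)
      finally show ?thesis by (simp add: algebra_simps)
    qed
    ultimately show ?thesis using eig tangent by blast
  qed
  define x y where "x = v \<bullet> t1" and "y = v \<bullet> t2"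
  have v_coords: "v = x *\<^sub>R t1 + y *\<^sub>R t2" using expand[OF v] by (simp add: x_def y_def)
  have "(norm (A v))\<^sup>2 = (x * \<alpha> + y * \<beta>)\<^sup>2 + (x * \<beta> + y * \<gamma>)\<^sup>2"
    unfolding v_coords A_coords norm_sq ..
  also have "\<dots> \<le> K\<^sup>2 * (norm v)\<^sup>2"
    unfolding v_coords norm_sq by (rule symmetric_2x2_image_bound(2)[OF roots_bounded])
  finally show ?thesis
    using symmetric_2x2_image_bound(1)[OF roots_bounded]
    by (metis power2_le_imp_le power_mult_distrib mult_nonneg_nonneg norm_ge_zero)
qed

section \<open>Second derivatives\<close>

lemma has_real_derivative_along_line:
  fixes f :: "'a::real_normed_vector \<Rightarrow> real"
  assumes "(f has_derivative f') (at (a + s *\<^sub>R v))"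
  shows "((\<lambda>s. f (a + s *\<^sub>R v)) has_real_derivative f' v) (at s)"
proof -
  have "((\<lambda>s. a + s *\<^sub>R v) has_derivative (\<lambda>t. t *\<^sub>R v)) (at s)"
    by (auto intro!: derivative_eq_intros)
  from has_derivative_compose[OF this assms]
  have "((\<lambda>s. f (a + s *\<^sub>R v)) has_derivative (\<lambda>t. f' (t *\<^sub>R v))) (at s)" by (simp add: o_def)
  moreover have "(\<lambda>t. f' (t *\<^sub>R v)) = (*) (f' v)"
    using has_derivative_linear[OF assms] by (auto simp: fun_eq_iff linear_scale)
  ultimately show ?thesis unfolding has_field_derivative_def by simp
qed

lemma second_difference_mean_value:
  fixes F :: "'a::euclidean_space \<Rightarrow> real" and G :: "'a \<Rightarrow> 'a"
  assumes U: "ball p r \<subseteq> U"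
    and dF: "\<And>y. y \<in> U \<Longrightarrow> (F has_derivative (\<lambda>u. G y \<bullet> u)) (at y)"
    and dG: "\<And>y u. y \<in> U \<Longrightarrow> ((\<lambda>z. G z \<bullet> u) has_derivative (\<lambda>w. H y w u)) (at y)"
    and h: "h > 0" "h * (norm v + norm w) < r"
  obtains q where "dist q p \<le> h * (norm v + norm w)"
    "F (p + h *\<^sub>R v + h *\<^sub>R w) - F (p + h *\<^sub>R v) - F (p + h *\<^sub>R w) + F p = h\<^sup>2 * H q w v"
proof -
  have near: "dist (p + s *\<^sub>R v + t *\<^sub>R w) p \<le> h * (norm v + norm w)"
    if "0 \<le> s" "s \<le> h" "0 \<le> t" "t \<le> h" for s t
  proof -
    have "norm (s *\<^sub>R v + t *\<^sub>R w) \<le> s * norm v + t * norm w"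
      using norm_triangle_ineq[of "s *\<^sub>R v" "t *\<^sub>R w"] that by simp
    also have "\<dots> \<le> h * (norm v + norm w)"
      using that by (simp add: distrib_left add_mono mult_right_mono)
    finally show ?thesis by (simp add: dist_norm)
  qed
  have inU: "p + s *\<^sub>R v + t *\<^sub>R w \<in> U" if "0 \<le> s" "s \<le> h" "0 \<le> t" "t \<le> h" for s t
    using near[OF that] h U by (auto simp: dist_commute)
  define g where "g s = F ((p + h *\<^sub>R w) + s *\<^sub>R v) - F (p + s *\<^sub>R v)" for s
  have dg: "DERIV g s :> G (p + s *\<^sub>R v + h *\<^sub>R w) \<bullet> v - G (p + s *\<^sub>R v) \<bullet> v"
    if "0 \<le> s" "s \<le> h" for s
  proof -
    have a: "p + h *\<^sub>R w + s *\<^sub>R v \<in> U" and b: "p + s *\<^sub>R v \<in> U"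
      using inU[of s h] inU[of s 0] that h by (simp_all add: algebra_simps)
    show ?thesis unfolding g_def
      using DERIV_diff[OF has_real_derivative_along_line[OF dF[OF a]]
          has_real_derivative_along_line[of F _ p s v, OF dF[OF b]]]
      by (simp add: algebra_simps)
  qed
  then obtain \<xi> where \<xi>: "0 < \<xi>" "\<xi> < h"
    "g h - g 0 = h * (G (p + \<xi> *\<^sub>R v + h *\<^sub>R w) \<bullet> v - G (p + \<xi> *\<^sub>R v) \<bullet> v)"
    using MVT2[OF h(1), of g, OF dg] by auto
  define k where "k t = G ((p + \<xi> *\<^sub>R v) + t *\<^sub>R w) \<bullet> v" for t
  have dk: "DERIV k t :> H (p + \<xi> *\<^sub>R v + t *\<^sub>R w) w v" if "0 \<le> t" "t \<le> h" for t
    unfolding k_def using has_real_derivative_along_line[OF dG[OF inU]] that \<xi> by simp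
  then obtain \<eta> where \<eta>: "0 < \<eta>" "\<eta> < h" "k h - k 0 = h * H (p + \<xi> *\<^sub>R v + \<eta> *\<^sub>R w) w v"
    using MVT2[OF h(1), of k, OF dk] by auto
  have "F (p + h *\<^sub>R v + h *\<^sub>R w) - F (p + h *\<^sub>R v) - F (p + h *\<^sub>R w) + F p = g h - g 0"
    by (simp add: g_def algebra_simps)
  also have "\<dots> = h * (k h - k 0)" using \<xi>(3) by (simp add: k_def algebra_simps)
  also have "\<dots> = h\<^sup>2 * H (p + \<xi> *\<^sub>R v + \<eta> *\<^sub>R w) w v" using \<eta>(3) by (simp add: power2_eq_square)
  finally have "F (p + h *\<^sub>R v + h *\<^sub>R w) - F (p + h *\<^sub>R v) - F (p + h *\<^sub>R w) + F p
      = h\<^sup>2 * H (p + \<xi> *\<^sub>R v + \<eta> *\<^sub>R w) w v" .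
  moreover have "dist (p + \<xi> *\<^sub>R v + \<eta> *\<^sub>R w) p \<le> h * (norm v + norm w)"
    using near \<xi> \<eta> by simp
  ultimately show ?thesis using that by blast
qed

lemma second_derivative_symmetric:
  fixes F :: "'a::euclidean_space \<Rightarrow> real" and G :: "'a \<Rightarrow> 'a"
  assumes U: "open U" "p \<in> U"
    and dF: "\<And>y. y \<in> U \<Longrightarrow> (F has_derivative (\<lambda>u. G y \<bullet> u)) (at y)"
    and dG: "\<And>y u. y \<in> U \<Longrightarrow> ((\<lambda>z. G z \<bullet> u) has_derivative (\<lambda>w. H y w u)) (at y)"
    and cH: "\<And>w u. continuous_on U (\<lambda>y. H y w u)"
  shows "H p w v = H p v w"
proof (rule ccontr)
  assume "H p w v \<noteq> H p v w"
  define D where "D = \<bar>H p w v - H p v w\<bar>"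
  have "D > 0" using \<open>H p w v \<noteq> H p v w\<close> by (simp add: D_def)
  have "\<exists>d>0. \<forall>q. dist q p < d \<longrightarrow> \<bar>H q a b - H p a b\<bar> < D / 3" for a b
  proof -
    have "isCont (\<lambda>y. H y a b) p" using cH U continuous_on_eq_continuous_at by blast
    from this[unfolded continuous_at_eps_delta, rule_format, of "D / 3"]
    show ?thesis using \<open>D > 0\<close> by (simp add: dist_real_def)
  qed
  then obtain d1 d2 where d1: "d1 > 0" "\<And>q. dist q p < d1 \<Longrightarrow> \<bar>H q w v - H p w v\<bar> < D / 3"
    and d2: "d2 > 0" "\<And>q. dist q p < d2 \<Longrightarrow> \<bar>H q v w - H p v w\<bar> < D / 3"
    by meson
  obtain r where r: "r > 0" "ball p r \<subseteq> U" using U openE by blast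
  define m where "m = min (min d1 d2) r"
  have m: "m > 0" "m \<le> d1" "m \<le> d2" "m \<le> r" using d1 d2 r by (auto simp: m_def)
  define h where "h = m / (2 * (norm v + norm w + 1))"
  have h: "h > 0" "h * (norm v + norm w) < m"
  proof -
    have pos: "norm v + norm w + 1 > 0" by (simp add: add_nonneg_pos)
    then show "h > 0" using m by (simp add: h_def)
    have "h * (norm v + norm w) \<le> h * (norm v + norm w + 1)" using \<open>h > 0\<close> by simp
    also have "\<dots> = m / 2" using pos by (simp add: h_def field_simps)
    finally show "h * (norm v + norm w) < m" using m by simp
  qed
  obtain q1 where q1: "dist q1 p \<le> h * (norm v + norm w)"
    "F (p + h *\<^sub>R v + h *\<^sub>R w) - F (p + h *\<^sub>R v) - F (p + h *\<^sub>R w) + F p = h\<^sup>2 * H q1 w v"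
    by (rule second_difference_mean_value[OF r(2) dF dG h(1)]) (use h m in auto)
  obtain q2 where q2: "dist q2 p \<le> h * (norm w + norm v)"
    "F (p + h *\<^sub>R w + h *\<^sub>R v) - F (p + h *\<^sub>R w) - F (p + h *\<^sub>R v) + F p = h\<^sup>2 * H q2 v w"
    by (rule second_difference_mean_value[OF r(2) dF dG h(1), where v=w and w=v])
      (use h m in \<open>auto simp: add.commute\<close>)
  \<comment> \<open>the second difference is symmetric in \<open>v\<close> and \<open>w\<close>\<close>
  have "H q1 w v = H q2 v w" using q1(2) q2(2) h(1) by (simp add: algebra_simps)
  moreover have "\<bar>H q1 w v - H p w v\<bar> < D / 3" "\<bar>H q2 v w - H p v w\<bar> < D / 3"
    using d1 d2 q1(1) q2(1) h m by (simp_all add: add.commute)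
  ultimately show False unfolding D_def by argo
qed

lemma C2_gradient_has_symmetric_derivative:
  fixes F :: "'a::euclidean_space \<Rightarrow> real" and G :: "'a \<Rightarrow> 'a"
  assumes U: "open U" and C2: "Ck_on 2 F U"
    and dF: "\<And>y. y \<in> U \<Longrightarrow> (F has_derivative (\<lambda>v. G y \<bullet> v)) (at y)"
  obtains DG where "\<And>y. y \<in> U \<Longrightarrow> (G has_derivative DG y) (at y)"
    "\<And>y v w. y \<in> U \<Longrightarrow> DG y v \<bullet> w = DG y w \<bullet> v"
proof -
  have "Ck_on (Suc (Suc 0)) F U" using C2 by (simp only: numeral_2_eq_2)
  then obtain f' where f': "\<And>y. y \<in> U \<Longrightarrow> (F has_derivative f' y) (at y)"
    and f2ex: "\<forall>v. \<exists>f''. (\<forall>y\<in>U. ((\<lambda>y. f' y v) has_derivative f'' y) (at y)) \<and>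
                        (\<forall>w. continuous_on U (\<lambda>y. f'' y w))"
    by auto
  obtain H where "\<forall>v. (\<forall>y\<in>U. ((\<lambda>y. f' y v) has_derivative H v y) (at y)) \<and>
                        (\<forall>w. continuous_on U (\<lambda>y. H v y w))"
    using choice[OF f2ex] by blast
  then have H: "\<And>v y. y \<in> U \<Longrightarrow> ((\<lambda>y. f' y v) has_derivative (\<lambda>w. H v y w)) (at y)"
    and cH: "\<And>v w. continuous_on U (\<lambda>y. H v y w)"
    by auto
  have "f' y = (\<lambda>v. G y \<bullet> v)" if "y \<in> U" for y
    using has_derivative_unique[OF f'[OF that] dF[OF that]] .
  then have dGv: "((\<lambda>z. G z \<bullet> v) has_derivative H v y) (at y)" if "y \<in> U" for y v
    using has_derivative_transform_within_open[OF H[OF that] U that, where g="\<lambda>z. G z \<bullet> v"] by simp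
  have H_sym: "H v y w = H w y v" if "y \<in> U" for y v w
    by (rule second_derivative_symmetric[OF U that dF, of "\<lambda>y w u. H u y w"])
      (use dGv cH in auto)
  define DG where "DG y w = (\<Sum>b\<in>Basis. H b y w *\<^sub>R b)" for y w
  have dG: "(G has_derivative DG y) (at y)" if "y \<in> U" for y
  proof -
    have "((\<lambda>z. \<Sum>b\<in>Basis. (G z \<bullet> b) *\<^sub>R b) has_derivative DG y) (at y)"
      unfolding DG_def by (intro has_derivative_sum has_derivative_scaleR_left dGv[OF that])
    then show ?thesis by (simp add: euclidean_representation)
  qed
  have DG_inner: "DG y w \<bullet> v = H v y w" if "y \<in> U" for y v w
    using fun_cong[OF has_derivative_unique[OF
          bounded_linear.has_derivative[OF bounded_linear_inner_left dG[OF that]] dGv[OF that, of v]], of w]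
    by simp
  show ?thesis
    by (rule that[OF dG]) (simp_all add: DG_inner H_sym)
qed

lemma has_derivative_sgn_comp:
  fixes G :: "'a::real_normed_vector \<Rightarrow> 'b::real_inner"
  assumes dG: "(G has_derivative DG) (at y)" and g: "G y \<noteq> 0"
  shows "((\<lambda>z. sgn (G z)) has_derivative
          (\<lambda>w. DG w /\<^sub>R norm (G y) - ((G y \<bullet> DG w) / norm (G y) ^ 3) *\<^sub>R G y)) (at y)"
proof -
  have dn: "((\<lambda>z. norm (G z)) has_derivative (\<lambda>w. sgn (G y) \<bullet> DG w)) (at y)"
    using has_derivative_compose[OF dG has_derivative_norm[OF g]] by (simp add: inner_commute)
  have "((\<lambda>z. inverse (norm (G z)) *\<^sub>R G z) has_derivative
      (\<lambda>w. inverse (norm (G y)) *\<^sub>R DG w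
           - (inverse (norm (G y)) * (sgn (G y) \<bullet> DG w) * inverse (norm (G y))) *\<^sub>R G y)) (at y)"
    using has_derivative_scaleR[OF Deriv.has_derivative_inverse[OF _ dn] dG] g by simp
  moreover have "(\<lambda>w. inverse (norm (G y)) *\<^sub>R DG w
           - (inverse (norm (G y)) * (sgn (G y) \<bullet> DG w) * inverse (norm (G y))) *\<^sub>R G y)
      = (\<lambda>w. DG w /\<^sub>R norm (G y) - ((G y \<bullet> DG w) / norm (G y) ^ 3) *\<^sub>R G y)"
    using g by (auto simp: fun_eq_iff sgn_div_norm field_simps power3_eq_cube)
  ultimately show ?thesis by (simp add: sgn_div_norm)
qed

section \<open>Local defining functions and unit normals\<close>

lemma local_definingD:
  assumes "local_defining S p U F G"
  shows "open U" "p \<in> U" "smooth_on F U"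
    "\<And>y. y \<in> U \<Longrightarrow> (F has_derivative (\<lambda>v. G y \<bullet> v)) (at y)"
    "\<And>y. y \<in> U \<Longrightarrow> G y \<noteq> 0" "S \<inter> U = {y\<in>U. F y = 0}"
  using assms unfolding local_defining_def by auto

lemma local_defining_at:
  "local_defining S p U F G \<Longrightarrow> y \<in> U \<Longrightarrow> local_defining S y U F G"
  unfolding local_defining_def by blast

lemma local_defining_gradient_has_symmetric_derivative:
  assumes "local_defining S p U F G"
  obtains DG where "\<And>y. y \<in> U \<Longrightarrow> (G has_derivative DG y) (at y)"
    "\<And>y v w. y \<in> U \<Longrightarrow> DG y v \<bullet> w = DG y w \<bullet> v"
proof -
  have "Ck_on 2 F U" using local_definingD(3)[OF assms] unfolding smooth_on_def by blast
  from C2_gradient_has_symmetric_derivative[OF local_definingD(1)[OF assms] this local_definingD(4)[OF assms]]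
  show ?thesis using that by blast
qed

text \<open>The differential of the Gauss map \<open>sgn \<circ> G\<close> is self-adjoint on the tangent plane, and by
  definition its eigenvalues there are the negated principal curvatures.\<close>

lemma gauss_map_derivative_bound:
  assumes ld: "local_defining S p U F G" and cb: "curvature_bounded S \<kappa>"
    and y: "y \<in> S" "y \<in> U"
  obtains A where "((\<lambda>z. sgn (G z)) has_derivative A) (at y)"
    "\<And>v. G y \<bullet> v = 0 \<Longrightarrow> norm (A v) \<le> \<kappa> * norm v"
proof -
  obtain DG where dG: "(G has_derivative DG) (at y)" and sym: "\<And>v w. DG v \<bullet> w = DG w \<bullet> v"
    using local_defining_gradient_has_symmetric_derivative[OF ld] y(2) by metis
  have g: "G y \<noteq> 0" using local_definingD(5)[OF ld y(2)] .
  define A where "A w = DG w /\<^sub>R norm (G y) - ((G y \<bullet> DG w) / norm (G y) ^ 3) *\<^sub>R G y" for w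
  have dN: "((\<lambda>z. sgn (G z)) has_derivative A) (at y)"
    unfolding A_def by (rule has_derivative_sgn_comp[OF dG g])
  have gg: "G y \<bullet> G y = (norm (G y))\<^sup>2" by (simp add: power2_norm_eq_inner)
  have inv: "G y \<bullet> A v = 0" for v
    unfolding A_def using g by (simp add: inner_diff_right gg field_simps power2_eq_square power3_eq_cube)
  have A_inner: "A v \<bullet> w = (DG v \<bullet> w) / norm (G y)" if "G y \<bullet> w = 0" for v w
    unfolding A_def inner_diff_left using that by (simp add: divide_inverse_commute)
  show ?thesis
  proof (rule that[OF dN])
    fix v assume v: "G y \<bullet> v = 0"
    show "norm (A v) \<le> \<kappa> * norm v"
    proof (rule self_adjoint_on_plane_norm_bound[OF g _ inv _ _ v])
      show "linear A" using dN has_derivative_linear by blast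
      show "A v \<bullet> w = A w \<bullet> v" if "G y \<bullet> v = 0" "G y \<bullet> w = 0" for v w
        using A_inner[OF that(2), of v] A_inner[OF that(1), of w] sym[of v w] by simp
      show "\<bar>k\<bar> \<le> \<kappa>" if "v \<noteq> 0" "G y \<bullet> v = 0" "A v = k *\<^sub>R v" for v k
      proof -
        have "principal_curvature G y (-k)"
          unfolding principal_curvature_def
          using dN that by (intro exI[of _ A] exI[of _ v]) (simp add: sgn_div_norm divide_inverse_commute)
        then show ?thesis
          using cb local_defining_at[OF ld y(2)] y(1) unfolding curvature_bounded_def by fastforce
      qed
    qed
  qed
qed

lemma inner_cross_right_inverse:
  fixes g h :: "real^3"
  defines "c \<equiv> g \<times> h"
  assumes "c \<noteq> 0"
  shows "g \<bullet> ((a *\<^sub>R (h \<times> c) + b *\<^sub>R (c \<times> g)) /\<^sub>R (c \<bullet> c)) = a"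
    and "h \<bullet> ((a *\<^sub>R (h \<times> c) + b *\<^sub>R (c \<times> g)) /\<^sub>R (c \<bullet> c)) = b"
proof -
  have "g \<bullet> (h \<times> c) = c \<bullet> c" "h \<bullet> (c \<times> g) = c \<bullet> c"
    using cross_triple[of g h c] cross_triple[of c g h] by (simp_all add: c_def inner_commute)
  then show "g \<bullet> ((a *\<^sub>R (h \<times> c) + b *\<^sub>R (c \<times> g)) /\<^sub>R (c \<bullet> c)) = a"
    and "h \<bullet> ((a *\<^sub>R (h \<times> c) + b *\<^sub>R (c \<times> g)) /\<^sub>R (c \<bullet> c)) = b"
    using assms(2) by (simp_all add: inner_add_right dot_cross_self)
qed

text \<open>Two local defining functions of the same surface have parallel gradients: otherwise
  \<open>(F\<^sub>1, F\<^sub>2)\<close> would be a submersion at \<open>y\<close>, hence an open map, and would take a value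
  \<open>(0, \<epsilon>)\<close> with \<open>\<epsilon> \<noteq> 0\<close>, i.e. at a point of the surface where \<open>F\<^sub>2\<close> does not vanish.\<close>

lemma local_defining_gradients_parallel:
  assumes ld1: "local_defining S p1 U1 F1 G1" and ld2: "local_defining S p2 U2 F2 G2"
    and y: "y \<in> S" "y \<in> U1" "y \<in> U2"
  shows "G1 y \<times> G2 y = 0"
proof (rule ccontr)
  define c where "c = G1 y \<times> G2 y"
  assume "G1 y \<times> G2 y \<noteq> 0"
  then have c: "c \<noteq> 0" by (simp add: c_def)
  define U where "U = U1 \<inter> U2"
  have U: "open U" "y \<in> U" using local_definingD(1)[OF ld1] local_definingD(1)[OF ld2] y
    by (auto simp: U_def)
  define \<Phi> where "\<Phi> z = (F1 z, F2 z)" for z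
  have d\<Phi>: "(\<Phi> has_derivative (\<lambda>w. (G1 z \<bullet> w, G2 z \<bullet> w))) (at z)" if "z \<in> U" for z
    unfolding \<Phi>_def using that local_definingD(4)[OF ld1] local_definingD(4)[OF ld2]
    by (auto simp: U_def intro!: has_derivative_Pair)
  define R where "R ab = (fst ab *\<^sub>R (G2 y \<times> c) + snd ab *\<^sub>R (c \<times> G1 y)) /\<^sub>R (c \<bullet> c)" for ab
  have "bounded_linear R"
    unfolding R_def by (intro bounded_linear_intros)
  moreover have "(\<lambda>w. (G1 y \<bullet> w, G2 y \<bullet> w)) \<circ> R = id"
    using inner_cross_right_inverse[of "G1 y" "G2 y"] c by (auto simp: R_def c_def)
  moreover have "continuous_on U \<Phi>"
    using d\<Phi> by (meson has_derivative_continuous continuous_at_imp_continuous_on)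
  ultimately have "\<Phi> y \<in> interior (\<Phi> ` U)"
    using sussmann_open_mapping[OF U(1) _ U(2) d\<Phi>[OF U(2)] _ _ order_refl] U by (simp add: interior_open)
  moreover have "\<Phi> y = (0, 0)"
    using local_definingD(6)[OF ld1] local_definingD(6)[OF ld2] y by (auto simp: \<Phi>_def)
  ultimately obtain \<epsilon> where "\<epsilon> > 0" "ball (0, 0) \<epsilon> \<subseteq> \<Phi> ` U"
    by (auto simp: mem_interior)
  then have "(0, \<epsilon> / 2) \<in> \<Phi> ` U" by (auto simp: dist_Pair_Pair)
  then obtain z where z: "z \<in> U1" "z \<in> U2" "F1 z = 0" "F2 z = \<epsilon> / 2"
    by (auto simp: \<Phi>_def U_def)
  then have "z \<in> S" using local_definingD(6)[OF ld1] by blast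
  then have "F2 z = 0" using z(2) local_definingD(6)[OF ld2] by blast
  then show False using z(4) \<open>\<epsilon> > 0\<close> by simp
qed

lemma unit_orthogonal_to_hyperplane:
  fixes g v :: "'a::real_inner"
  assumes g: "g \<noteq> 0" and v: "norm v = 1" and perp: "\<And>w. g \<bullet> w = 0 \<Longrightarrow> v \<bullet> w = 0"
  shows "v = sgn g \<or> v = - sgn g"
proof -
  define c where "c = (v \<bullet> g) / (g \<bullet> g)"
  have gw: "g \<bullet> (v - c *\<^sub>R g) = 0" using g by (simp add: c_def inner_diff_right inner_commute)
  then have "(v - c *\<^sub>R g) \<bullet> (v - c *\<^sub>R g) = 0"
    using perp[OF gw] by (simp add: inner_diff_left)
  then have vc: "v = c *\<^sub>R g" by simp
  then have "\<bar>c\<bar> * norm g = 1" using v by simp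
  then have "c = 1 / norm g \<or> c = - (1 / norm g)" using g by (auto simp: abs_if field_simps split: if_splits)
  then show ?thesis using vc by (auto simp: sgn_div_norm divide_inverse_commute)
qed

lemma unit_normal_iff_sgn_gradient:
  assumes ld: "local_defining S p U F G" and y: "y \<in> S" "y \<in> U"
  shows "unit_normal S y v \<longleftrightarrow> v = sgn (G y) \<or> v = - sgn (G y)"
proof
  assume "unit_normal S y v"
  then obtain U' F' G' where ld': "local_defining S y U' F' G'" and v: "norm v = 1"
    and perp: "\<And>w. G' y \<bullet> w = 0 \<Longrightarrow> v \<bullet> w = 0"
    unfolding unit_normal_def by blast
  have "v = sgn (G' y) \<or> v = - sgn (G' y)"
    using unit_orthogonal_to_hyperplane[OF local_definingD(5)[OF ld' local_definingD(2)[OF ld']] v perp] .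
  moreover have "sgn (G' y) = sgn (G y) \<or> sgn (G' y) = - sgn (G y)"
    using sgn_eq_or_neg_if_cross_eq_0[OF local_defining_gradients_parallel[OF ld' ld y(1) _ y(2)]]
      local_definingD(2,5)[OF ld'] local_definingD(5)[OF ld y(2)] by blast
  ultimately show "v = sgn (G y) \<or> v = - sgn (G y)" by auto
next
  assume v: "v = sgn (G y) \<or> v = - sgn (G y)"
  have "G y \<noteq> 0" using local_definingD(5)[OF ld y(2)] .
  then have "norm v = 1" "\<forall>w. G y \<bullet> w = 0 \<longrightarrow> v \<bullet> w = 0"
    using v by (auto simp: norm_sgn sgn_div_norm)
  then show "unit_normal S y v"
    unfolding unit_normal_def using y(1) local_defining_at[OF ld y(2)] by blast
qed

lemma has_vector_derivative_eq_0_if_locally_constant: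
  fixes f :: "real \<Rightarrow> 'a::real_normed_vector"
  assumes ab: "a < b" and t: "t \<in> {a..b}"
    and df: "(f has_vector_derivative f') (at t within {a..b})"
    and d: "d > 0" and c: "\<And>s. s \<in> {a..b} \<Longrightarrow> dist s t < d \<Longrightarrow> f s = c"
  shows "f' = 0"
proof -
  have "((\<lambda>s. c) has_vector_derivative f') (at t within {a..b})"
    by (rule has_vector_derivative_transform_within[OF df d t]) (simp add: c)
  from vector_derivative_unique_within_closed_interval[OF ab _ this[folded cbox_interval]
      has_vector_derivative_const[folded cbox_interval]]
  show ?thesis using t by (simp add: cbox_interval)
qed

lemma continuous_within_imp_near_in_open:
  fixes \<gamma> :: "'a::metric_space \<Rightarrow> 'b::metric_space"
  assumes "continuous (at t within I) \<gamma>" "open U" "\<gamma> t \<in> U"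
  obtains d where "d > 0" "\<And>s. s \<in> I \<Longrightarrow> dist s t < d \<Longrightarrow> \<gamma> s \<in> U"
proof -
  obtain r where r: "r > 0" "ball (\<gamma> t) r \<subseteq> U" using assms(2,3) openE by blast
  obtain d where "d > 0" "\<forall>s\<in>I. dist s t < d \<longrightarrow> dist (\<gamma> s) (\<gamma> t) < r"
    using assms(1) r(1) unfolding continuous_within_eps_delta by blast
  then show ?thesis using that r(2) by (auto simp: dist_commute subset_iff)
qed

lemma curve_tangent_orthogonal_gradient:
  assumes ab: "a < b" and t: "t \<in> {a..b}"
    and d\<gamma>: "(\<gamma> has_vector_derivative \<gamma>') (at t within {a..b})"
    and inS: "\<gamma> ` {a..b} \<subseteq> S"
    and ld: "local_defining S x U F G" and tU: "\<gamma> t \<in> U"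
  shows "G (\<gamma> t) \<bullet> \<gamma>' = 0"
proof -
  obtain d where d: "d > 0" "\<And>s. s \<in> {a..b} \<Longrightarrow> dist s t < d \<Longrightarrow> \<gamma> s \<in> U"
    using continuous_within_imp_near_in_open[OF has_vector_derivative_continuous[OF d\<gamma>]
        local_definingD(1)[OF ld] tU] by blast
  have "((\<lambda>s. F (\<gamma> s)) has_derivative (\<lambda>h. G (\<gamma> t) \<bullet> (h *\<^sub>R \<gamma>'))) (at t within {a..b})"
    using has_derivative_compose[OF d\<gamma>[unfolded has_vector_derivative_def] local_definingD(4)[OF ld tU]] .
  then have "((\<lambda>s. F (\<gamma> s)) has_vector_derivative (G (\<gamma> t) \<bullet> \<gamma>')) (at t within {a..b})"
    unfolding has_vector_derivative_def by (simp add: mult.commute)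
  moreover have "F (\<gamma> s) = 0" if "s \<in> {a..b}" "dist s t < d" for s
    using inS d(2)[OF that] that(1) local_definingD(6)[OF ld] by blast
  ultimately show ?thesis using has_vector_derivative_eq_0_if_locally_constant[OF ab t _ d(1)] by blast
qed

section \<open>One-variable estimates\<close>

lemma lipschitz_on_interval_if_locally:
  fixes f :: "real \<Rightarrow> 'a::metric_space"
  assumes loc: "\<And>t. t \<in> {a..b} \<Longrightarrow> \<exists>d>0. L-lipschitz_on ({a..b} \<inter> ball t d) f" and L: "L \<ge> 0"
  shows "L-lipschitz_on {a..b} f"
proof (rule locally_lipschitz_imp_lipschitz[OF _ _ L])
  show "continuous_on {a..b} f"
    unfolding continuous_on_eq_continuous_within
  proof
    fix t assume t: "t \<in> {a..b}"
    then obtain d where d: "d > 0" "L-lipschitz_on ({a..b} \<inter> ball t d) f" using loc by blast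
    have "at t within ({a..b} \<inter> ball t d) = at t within {a..b}"
      by (rule at_within_nhd[of _ "ball t d"]) (use d in auto)
    moreover have "continuous (at t within ({a..b} \<inter> ball t d)) f"
      by (rule lipschitz_on_continuous_within[OF d(2)]) (use t d(1) in auto)
    ultimately show "continuous (at t within {a..b}) f" by simp
  qed
  fix x y assume x: "x \<in> {a..<b}" and "y > x"
  then obtain d where d: "d > 0" "L-lipschitz_on ({a..b} \<inter> ball x d) f" using loc by force
  define z where "z = min (min y b) (x + d / 2)"
  have z: "z \<in> {x<..y}" "z \<in> {a..b} \<inter> ball x d" "x \<in> {a..b} \<inter> ball x d"
    using x \<open>y > x\<close> d(1) by (auto simp: z_def dist_real_def)
  have "dist (f z) (f x) \<le> L * (z - x)"
    using lipschitz_onD[OF d(2) z(2,3)] z(1) by (simp add: dist_real_def)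
  then show "\<exists>z\<in>{x<..y}. dist (f z) (f x) \<le> L * (z - x)" using z(1) by blast
qed

text \<open>In the interior \<open>\<bar>t - s\<^sub>0\<bar> = \<sigma> (t - s\<^sub>0)\<close> with a fixed sign \<open>\<sigma>\<close>, so the comparison function is a
  quadratic polynomial.\<close>

lemma increment_lower_bound_from_endpoint:
  fixes f f' :: "real \<Rightarrow> real"
  assumes ab: "a \<le> b" and s0: "s0 \<in> {a, b}"
    and df: "\<And>t. t \<in> {a..b} \<Longrightarrow> (f has_real_derivative f' t) (at t within {a..b})"
    and lb: "\<And>t. a < t \<Longrightarrow> t < b \<Longrightarrow> c - \<kappa> * \<bar>t - s0\<bar> \<le> f' t"
  shows "c * (b - a) - \<kappa> * (b - a)\<^sup>2 / 2 \<le> f b - f a"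
proof -
  define \<sigma> :: real where "\<sigma> = (if s0 = a then 1 else -1)"
  define g where "g t = f t - c * t + \<sigma> * \<kappa> * (t - s0)\<^sup>2 / 2" for t
  have dg: "(g has_real_derivative f' t - c + \<sigma> * \<kappa> * (t - s0)) (at t within {a..b})"
    if "t \<in> {a..b}" for t
    unfolding g_def using df[OF that] by (auto intro!: derivative_eq_intros)
  have "g a \<le> g b"
  proof (rule DERIV_nonneg_imp_increasing_open[OF ab])
    show "continuous_on {a..b} g" using dg by (rule DERIV_continuous_on)
    fix t assume t: "a < t" "t < b"
    have "\<sigma> * (t - s0) = \<bar>t - s0\<bar>" using s0 t by (auto simp: \<sigma>_def)
    then have "f' t - c + \<sigma> * \<kappa> * (t - s0) \<ge> 0" using lb[OF t] by (simp add: algebra_simps)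
    moreover have "(g has_real_derivative f' t - c + \<sigma> * \<kappa> * (t - s0)) (at t)"
      using dg[of t] t by (simp add: at_within_Icc_at)
    ultimately show "\<exists>y. (g has_real_derivative y) (at t) \<and> y \<ge> 0" by blast
  qed
  moreover have "\<sigma> * \<kappa> * (b - s0)\<^sup>2 / 2 - \<sigma> * \<kappa> * (a - s0)\<^sup>2 / 2 = \<kappa> * (b - a)\<^sup>2 / 2"
    using s0 by (auto simp: \<sigma>_def power2_commute)
  moreover have "f b - f a = g b - g a + c * (b - a)
      - (\<sigma> * \<kappa> * (b - s0)\<^sup>2 / 2 - \<sigma> * \<kappa> * (a - s0)\<^sup>2 / 2)"
    by (simp add: g_def algebra_simps)
  ultimately show ?thesis by linarith
qed

text \<open>A continuous function with \<open>c\<^sup>2 \<ge> 1 - x\<^sup>2\<close>, where \<open>x = \<kappa> \<bar>t - s\<^sub>0\<bar>\<close>, and \<open>c s\<^sub>0 > 0\<close> cannot change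
  sign while \<open>x < 1\<close>, so it stays above \<open>1 - x\<close>.\<close>

lemma continuous_lower_bound_from_square:
  fixes c :: "real \<Rightarrow> real"
  assumes cont: "continuous_on {a..b} c" and s0: "s0 \<in> {a..b}" and pos: "c s0 > 0" and \<kappa>: "\<kappa> \<ge> 0"
    and sq: "\<And>t. t \<in> {a..b} \<Longrightarrow> 1 - (\<kappa> * \<bar>t - s0\<bar>)\<^sup>2 \<le> (c t)\<^sup>2"
    and t: "t \<in> {a..b}" and small: "\<kappa> * \<bar>t - s0\<bar> < 1"
  shows "1 - \<kappa> * \<bar>t - s0\<bar> \<le> c t"
proof -
  have nonzero: "c z \<noteq> 0" if "z \<in> {a..b}" "\<bar>z - s0\<bar> \<le> \<bar>t - s0\<bar>" for z
  proof -
    have "\<kappa> * \<bar>z - s0\<bar> < 1" using mult_left_mono[OF that(2) \<kappa>] small by linarith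
    then have "(\<kappa> * \<bar>z - s0\<bar>)\<^sup>2 < 1" using \<kappa> by (simp add: abs_square_less_1)
    then show ?thesis using sq[OF that(1)] by auto
  qed
  have "c t > 0"
  proof (rule ccontr)
    assume "\<not> c t > 0"
    then have "\<exists>z. z \<in> {a..b} \<and> \<bar>z - s0\<bar> \<le> \<bar>t - s0\<bar> \<and> c z = 0"
    proof (cases "t \<le> s0")
      case True
      have "continuous_on {t..s0} c" using continuous_on_subset[OF cont] t s0 by auto
      then obtain z where "t \<le> z" "z \<le> s0" "c z = 0"
        using IVT'[of c t 0 s0] \<open>\<not> c t > 0\<close> pos True by auto
      then show ?thesis using t s0 by (intro exI[of _ z]) auto
    next
      case False
      have "continuous_on {s0..t} c" using continuous_on_subset[OF cont] t s0 by auto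
      then obtain z where "s0 \<le> z" "z \<le> t" "c z = 0"
        using IVT2'[of c t 0 s0] \<open>\<not> c t > 0\<close> pos False by auto
      then show ?thesis using t s0 by (intro exI[of _ z]) auto
    qed
    then show False using nonzero by blast
  qed
  have "(1 - \<kappa> * \<bar>t - s0\<bar>)\<^sup>2 \<le> 1 - (\<kappa> * \<bar>t - s0\<bar>)\<^sup>2"
    using mult_left_le[of "\<kappa> * \<bar>t - s0\<bar>" "\<kappa> * \<bar>t - s0\<bar>"] small \<kappa>
    by (simp add: power2_eq_square algebra_simps)
  also have "\<dots> \<le> (c t)\<^sup>2" using sq[OF t] .
  finally show ?thesis using \<open>c t > 0\<close> by (rule power2_le_imp_le[OF _ less_imp_le])
qed

section \<open>Curves on a surface\<close>

text \<open>Measuring the distance to the set of all unit normals avoids choosing their sign, which may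
  flip from one local defining function to another.\<close>

definition normal_gap :: "(real^3) set \<Rightarrow> real^3 \<Rightarrow> real^3 \<Rightarrow> real" where
  "normal_gap S y n = infdist n {v. unit_normal S y v}"

lemma normal_gap_eq_min:
  assumes "local_defining S p U F G" "y \<in> S" "y \<in> U"
  shows "normal_gap S y n = min (norm (n - sgn (G y))) (norm (n + sgn (G y)))"
proof -
  have normals: "{v. unit_normal S y v} = {sgn (G y)} \<union> {- sgn (G y)}"
    using unit_normal_iff_sgn_gradient[OF assms] by auto
  show ?thesis
    unfolding normal_gap_def normals by (subst infdist_Un_min) (auto simp: dist_norm)
qed

lemma normal_gap_eq_0: "unit_normal S y n \<Longrightarrow> normal_gap S y n = 0"
  by (simp add: normal_gap_def)

lemma inner_unit_tangent_le_normal_gap: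
  assumes ld: "local_defining S p U F G" and y: "y \<in> S" "y \<in> U"
    and e: "norm e = 1" "G y \<bullet> e = 0"
  shows "\<bar>e \<bullet> n\<bar> \<le> normal_gap S y n"
proof -
  have "sgn (G y) \<bullet> e = 0" using e(2) by (simp add: sgn_div_norm)
  then have "\<bar>e \<bullet> n\<bar> = \<bar>e \<bullet> (n - sgn (G y))\<bar>" "\<bar>e \<bullet> n\<bar> = \<bar>e \<bullet> (n + sgn (G y))\<bar>"
    by (simp_all add: inner_diff_right inner_add_right inner_commute)
  moreover have "\<bar>e \<bullet> w\<bar> \<le> norm w" for w using Cauchy_Schwarz_ineq2[of e w] e(1) by simp
  ultimately have "\<bar>e \<bullet> n\<bar> \<le> norm (n - sgn (G y))" "\<bar>e \<bullet> n\<bar> \<le> norm (n + sgn (G y))"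
    by metis+
  then show ?thesis using normal_gap_eq_min[OF ld y] by simp
qed

lemma normal_gap_diff_le:
  assumes ld: "local_defining S p U F G" and y: "y \<in> S" "y \<in> U" and z: "z \<in> S" "z \<in> U"
  shows "\<bar>normal_gap S y n - normal_gap S z n\<bar> \<le> norm (sgn (G y) - sgn (G z))"
proof -
  let ?N = "\<lambda>y. sgn (G y)"
  have "\<bar>norm (n - ?N y) - norm (n - ?N z)\<bar> \<le> norm (?N y - ?N z)"
    "\<bar>norm (n + ?N y) - norm (n + ?N z)\<bar> \<le> norm (?N y - ?N z)"
    using norm_triangle_ineq3[of "n - ?N y" "n - ?N z"] norm_triangle_ineq3[of "n + ?N y" "n + ?N z"]
    by (simp_all add: norm_minus_commute)
  moreover have "\<bar>min A B - min C D\<bar> \<le> max \<bar>A - C\<bar> \<bar>B - D\<bar>" for A B C D :: real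
    by argo
  ultimately show ?thesis
    unfolding normal_gap_eq_min[OF ld y] normal_gap_eq_min[OF ld z] by (meson max.boundedI order_trans)
qed

lemma gauss_map_lipschitz_along_curve:
  fixes \<gamma> \<gamma>' :: "real \<Rightarrow> real^3"
  assumes ld: "local_defining S p U F G" and cb: "curvature_bounded S \<kappa>" and \<kappa>: "\<kappa> \<ge> 0"
    and d\<gamma>: "\<And>t. t \<in> {a..b} \<Longrightarrow> (\<gamma> has_vector_derivative \<gamma>' t) (at t within {a..b})"
    and unit: "\<And>t. t \<in> {a..b} \<Longrightarrow> norm (\<gamma>' t) = 1"
    and ab: "a < b" and inS: "\<gamma> ` {a..b} \<subseteq> S"
    and J: "convex J" "J \<subseteq> {a..b}" and JU: "\<And>s. s \<in> J \<Longrightarrow> \<gamma> s \<in> U"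
  shows "\<kappa>-lipschitz_on J (\<lambda>s. sgn (G (\<gamma> s)))"
proof -
  have "\<exists>D. ((\<lambda>s. sgn (G (\<gamma> s))) has_derivative D) (at s within J) \<and> onorm D \<le> \<kappa>" if s: "s \<in> J" for s
  proof -
    have sI: "s \<in> {a..b}" using s J(2) by blast
    obtain A where dA: "((\<lambda>z. sgn (G z)) has_derivative A) (at (\<gamma> s))"
      and bA: "\<And>v. G (\<gamma> s) \<bullet> v = 0 \<Longrightarrow> norm (A v) \<le> \<kappa> * norm v"
      using gauss_map_derivative_bound[OF ld cb _ JU[OF s]] inS sI by blast
    have "(\<gamma> has_derivative (\<lambda>k. k *\<^sub>R \<gamma>' s)) (at s within J)"
      using has_vector_derivative_within_subset[OF d\<gamma>[OF sI] J(2)]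
      unfolding has_vector_derivative_def .
    from has_derivative_compose[OF this dA]
    have "((\<lambda>s. sgn (G (\<gamma> s))) has_derivative (\<lambda>k. k *\<^sub>R A (\<gamma>' s))) (at s within J)"
      using linear_scale[OF has_derivative_linear[OF dA]] by (simp add: o_def)
    moreover have "G (\<gamma> s) \<bullet> \<gamma>' s = 0"
      by (rule curve_tangent_orthogonal_gradient[OF ab sI d\<gamma>[OF sI] inS ld JU[OF s]])
    then have "norm (A (\<gamma>' s)) \<le> \<kappa>" using bA unit[OF sI] by fastforce
    then have "onorm (\<lambda>k. k *\<^sub>R A (\<gamma>' s)) \<le> \<kappa>"
      using onorm_scaleR_left[OF bounded_linear_ident, of "A (\<gamma>' s)"] onorm_id[where 'a=real] by simp
    ultimately show ?thesis by blast
  qed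
  then have "\<exists>D. \<forall>s\<in>J. ((\<lambda>s. sgn (G (\<gamma> s))) has_derivative D s) (at s within J) \<and> onorm (D s) \<le> \<kappa>"
    by (intro bchoice ballI)
  then obtain D where D: "\<forall>s\<in>J. ((\<lambda>s. sgn (G (\<gamma> s))) has_derivative D s) (at s within J) \<and> onorm (D s) \<le> \<kappa>"
    ..
  show ?thesis
    by (rule bounded_derivative_imp_lipschitz[of J _ D]) (use D \<kappa> J(1) in auto)
qed

lemma normal_gap_lipschitz_along_curve:
  fixes \<gamma> \<gamma>' :: "real \<Rightarrow> real^3"
  assumes surf: "smooth_surface S" and cb: "curvature_bounded S \<kappa>" and \<kappa>: "\<kappa> \<ge> 0"
    and d\<gamma>: "\<And>t. t \<in> {a..b} \<Longrightarrow> (\<gamma> has_vector_derivative \<gamma>' t) (at t within {a..b})"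
    and unit: "\<And>t. t \<in> {a..b} \<Longrightarrow> norm (\<gamma>' t) = 1"
    and ab: "a < b" and inS: "\<gamma> ` {a..b} \<subseteq> S"
  shows "\<kappa>-lipschitz_on {a..b} (\<lambda>t. normal_gap S (\<gamma> t) n)"
proof (rule lipschitz_on_interval_if_locally[OF _ \<kappa>])
  fix t0 assume t0: "t0 \<in> {a..b}"
  then obtain U F G where ld: "local_defining S (\<gamma> t0) U F G"
    using surf inS unfolding smooth_surface_def by blast
  obtain d where d: "d > 0" "\<And>s. s \<in> {a..b} \<Longrightarrow> dist s t0 < d \<Longrightarrow> \<gamma> s \<in> U"
    using continuous_within_imp_near_in_open[OF has_vector_derivative_continuous[OF d\<gamma>[OF t0]]
        local_definingD(1,2)[OF ld]] by blast
  define J where "J = {a..b} \<inter> ball t0 d"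
  have J: "s \<in> {a..b}" "\<gamma> s \<in> U" "\<gamma> s \<in> S" if "s \<in> J" for s
    using d that inS by (auto simp: J_def dist_commute)
  have N_lip: "\<kappa>-lipschitz_on J (\<lambda>s. sgn (G (\<gamma> s)))"
    by (rule gauss_map_lipschitz_along_curve[OF ld cb \<kappa> d\<gamma> unit ab inS])
      (auto simp: J_def convex_Int J(2))
  have "\<kappa>-lipschitz_on J (\<lambda>t. normal_gap S (\<gamma> t) n)"
  proof (rule lipschitz_onI[OF _ \<kappa>])
    fix u v assume uv: "u \<in> J" "v \<in> J"
    have "\<bar>normal_gap S (\<gamma> u) n - normal_gap S (\<gamma> v) n\<bar> \<le> norm (sgn (G (\<gamma> u)) - sgn (G (\<gamma> v)))"
      using normal_gap_diff_le[OF ld J(3,2)[OF uv(1)] J(3,2)[OF uv(2)]] .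
    also have "\<dots> \<le> \<kappa> * dist u v" using lipschitz_onD[OF N_lip uv] by (simp add: dist_norm)
    finally show "dist (normal_gap S (\<gamma> u) n) (normal_gap S (\<gamma> v) n) \<le> \<kappa> * dist u v"
      by (simp add: dist_real_def)
  qed
  then show "\<exists>d>0. \<kappa>-lipschitz_on ({a..b} \<inter> ball t0 d) (\<lambda>t. normal_gap S (\<gamma> t) n)"
    using d(1) by (auto simp: J_def)
qed

lemma curve_tangent_normal_component_le:
  fixes \<gamma> \<gamma>' :: "real \<Rightarrow> real^3"
  assumes surf: "smooth_surface S" and cb: "curvature_bounded S \<kappa>" and \<kappa>: "\<kappa> \<ge> 0"
    and d\<gamma>: "\<And>t. t \<in> {a..b} \<Longrightarrow> (\<gamma> has_vector_derivative \<gamma>' t) (at t within {a..b})"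
    and unit: "\<And>t. t \<in> {a..b} \<Longrightarrow> norm (\<gamma>' t) = 1"
    and ab: "a < b" and inS: "\<gamma> ` {a..b} \<subseteq> S"
    and s0: "s0 \<in> {a..b}" and n: "unit_normal S (\<gamma> s0) n" and t: "t \<in> {a..b}"
  shows "\<bar>\<gamma>' t \<bullet> n\<bar> \<le> \<kappa> * \<bar>t - s0\<bar>"
proof -
  obtain U F G where ld: "local_defining S (\<gamma> t) U F G"
    using surf inS t unfolding smooth_surface_def by blast
  have "G (\<gamma> t) \<bullet> \<gamma>' t = 0"
    using curve_tangent_orthogonal_gradient[OF ab t d\<gamma>[OF t] inS ld local_definingD(2)[OF ld]] .
  then have "\<bar>\<gamma>' t \<bullet> n\<bar> \<le> normal_gap S (\<gamma> t) n"
    using inner_unit_tangent_le_normal_gap[OF ld _ local_definingD(2)[OF ld] unit[OF t]] inS t by blast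
  also have "\<dots> = \<bar>normal_gap S (\<gamma> t) n - normal_gap S (\<gamma> s0) n\<bar>"
    using normal_gap_eq_0[OF n] by (simp add: normal_gap_def infdist_nonneg)
  also have "\<dots> \<le> \<kappa> * \<bar>t - s0\<bar>"
    using lipschitz_onD[OF normal_gap_lipschitz_along_curve[OF surf cb \<kappa> d\<gamma> unit ab inS] t s0]
    by (simp add: dist_real_def)
  finally show ?thesis .
qed

lemma has_vector_derivative_inner_right:
  "(\<gamma> has_vector_derivative \<gamma>') F \<Longrightarrow> ((\<lambda>s. l \<bullet> \<gamma> s) has_vector_derivative l \<bullet> \<gamma>') F"
  unfolding has_vector_derivative_def
  by (drule has_derivative_inner_right[of _ _ _ l]) (simp add: mult.commute)

lemma inner_derivative_eq_0_if_constant: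
  assumes ab: "a < b" and t: "t \<in> {a..b}"
    and d\<gamma>: "(\<gamma> has_vector_derivative \<gamma>') (at t within {a..b})"
    and const: "\<And>s. s \<in> {a..b} \<Longrightarrow> l \<bullet> \<gamma> s = c"
  shows "l \<bullet> \<gamma>' = 0"
  using has_vector_derivative_eq_0_if_locally_constant[OF ab t has_vector_derivative_inner_right[OF d\<gamma>]
      zero_less_one] const by blast

text \<open>All tangents lie in the plane of the curve, which has the orthonormal basis \<open>n\<close>, \<open>\<gamma>' s\<^sub>0\<close>.\<close>

lemma planar_unit_tangent_inner_sq:
  fixes \<gamma> \<gamma>' :: "real \<Rightarrow> real^3"
  assumes ab: "a < b"
    and d\<gamma>: "\<And>t. t \<in> {a..b} \<Longrightarrow> (\<gamma> has_vector_derivative \<gamma>' t) (at t within {a..b})"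
    and unit: "\<And>t. t \<in> {a..b} \<Longrightarrow> norm (\<gamma>' t) = 1"
    and plane: "\<And>t. t \<in> {a..b} \<Longrightarrow> \<exists>u w. \<gamma> t = p + u *\<^sub>R n + w *\<^sub>R (q - p)"
    and n: "norm n = 1" and s0: "s0 \<in> {a..b}" and ne: "n \<bullet> \<gamma>' s0 = 0" and t: "t \<in> {a..b}"
  shows "(\<gamma>' t \<bullet> \<gamma>' s0)\<^sup>2 = 1 - (\<gamma>' t \<bullet> n)\<^sup>2"
proof -
  define e where "e = \<gamma>' s0"
  define m where "m = n \<times> (q - p)"
  have "m \<bullet> \<gamma> s = m \<bullet> p" if "s \<in> {a..b}" for s
    using plane[OF that] by (auto simp: m_def inner_add_right dot_cross_self)
  then have m_tangent: "m \<bullet> \<gamma>' s = 0" if "s \<in> {a..b}" for s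
    using inner_derivative_eq_0_if_constant[OF ab that d\<gamma>[OF that]] by blast
  have "m \<noteq> 0"
  proof
    assume "m = 0"
    moreover have "n \<noteq> 0" using n by auto
    ultimately have qp: "q - p = ((q - p) \<bullet> n) *\<^sub>R n"
      using cross_dot_cancel[of n "q - p" "((q - p) \<bullet> n) *\<^sub>R n"] n
      by (simp add: m_def cross_mult_right inner_commute dot_square_norm)
    have "e \<bullet> (q - p) = 0" by (subst qp) (simp add: e_def ne inner_commute)
    then have "e \<bullet> \<gamma> s = e \<bullet> p" if "s \<in> {a..b}" for s
      using plane[OF that] ne by (auto simp: e_def inner_add_right inner_commute)
    then have "e \<bullet> e = 0"
      using inner_derivative_eq_0_if_constant[OF ab s0 d\<gamma>[OF s0]] by (simp add: e_def)
    then show False using unit[OF s0] by (simp add: e_def)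
  qed
  define c where "c = n \<times> sgn m"
  have nm: "norm (sgn m) = 1" "n \<bullet> sgn m = 0"
    using \<open>m \<noteq> 0\<close> by (simp_all add: norm_sgn sgn_div_norm m_def dot_cross_self)
  have expand: "w = (w \<bullet> n) *\<^sub>R n + (w \<bullet> c) *\<^sub>R c" if "m \<bullet> w = 0" for w
    using orthonormal_frame_expansion[OF n nm, of w] that by (simp add: c_def sgn_div_norm inner_commute)
  have norm_sq: "(norm w)\<^sup>2 = (w \<bullet> n)\<^sup>2 + (w \<bullet> c)\<^sup>2" if "m \<bullet> w = 0" for w
    using norm_sq_orthonormal_frame[OF n nm, of w] that by (simp add: c_def sgn_div_norm inner_commute)
  have e_c: "e = (e \<bullet> c) *\<^sub>R c" and ec: "(e \<bullet> c)\<^sup>2 = 1"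
    using expand[OF m_tangent[OF s0]] norm_sq[OF m_tangent[OF s0]] unit[OF s0] ne
    by (simp_all add: e_def inner_commute)
  have "\<gamma>' t \<bullet> e = (e \<bullet> c) * (\<gamma>' t \<bullet> c)" by (subst e_c) simp
  then have "(\<gamma>' t \<bullet> e)\<^sup>2 = (\<gamma>' t \<bullet> c)\<^sup>2" using ec by (simp add: power_mult_distrib)
  also have "\<dots> = 1 - (\<gamma>' t \<bullet> n)\<^sup>2" using norm_sq[OF m_tangent[OF t]] unit[OF t] by simp
  finally show ?thesis by (simp add: e_def)
qed

lemma planar_curve_tangent_lower_bound:
  fixes \<gamma> \<gamma>' \<gamma>'' :: "real \<Rightarrow> real^3"
  assumes d\<gamma>: "\<And>t. t \<in> {a..b} \<Longrightarrow> (\<gamma> has_vector_derivative \<gamma>' t) (at t within {a..b})"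
    and d\<gamma>': "\<And>t. t \<in> {a..b} \<Longrightarrow> (\<gamma>' has_vector_derivative \<gamma>'' t) (at t within {a..b})"
    and unit: "\<And>t. t \<in> {a..b} \<Longrightarrow> norm (\<gamma>' t) = 1"
    and plane: "\<And>t. t \<in> {a..b} \<Longrightarrow> \<exists>u w. \<gamma> t = p + u *\<^sub>R n + w *\<^sub>R (q - p)"
    and n: "norm n = 1" and s0: "s0 \<in> {a, b}"
    and normal_dev: "\<And>t. t \<in> {a..b} \<Longrightarrow> \<bar>\<gamma>' t \<bullet> n\<bar> \<le> \<kappa> * \<bar>t - s0\<bar>"
    and \<kappa>: "\<kappa> \<ge> 0" and short: "\<kappa> * (b - a) \<le> 1" and t: "a < t" "t < b"
  shows "1 - \<kappa> * \<bar>t - s0\<bar> \<le> \<gamma>' s0 \<bullet> \<gamma>' t"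
proof -
  have ab: "a < b" and s0I: "s0 \<in> {a..b}" using t s0 by auto
  have ne: "n \<bullet> \<gamma>' s0 = 0" using normal_dev[OF s0I] by (simp add: inner_commute)
  have "continuous_on {a..b} \<gamma>'"
    using d\<gamma>' by (meson continuous_on_eq_continuous_within has_vector_derivative_continuous)
  then have cont: "continuous_on {a..b} (\<lambda>t. \<gamma>' s0 \<bullet> \<gamma>' t)" by (intro continuous_intros)
  have "1 - (\<kappa> * \<bar>t - s0\<bar>)\<^sup>2 \<le> (\<gamma>' s0 \<bullet> \<gamma>' t)\<^sup>2" if "t \<in> {a..b}" for t
  proof -
    have "(\<gamma>' t \<bullet> n)\<^sup>2 \<le> (\<kappa> * \<bar>t - s0\<bar>)\<^sup>2"
      using normal_dev[OF that] by (metis abs_ge_zero power2_abs power_mono)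
    then show ?thesis
      using planar_unit_tangent_inner_sq[OF ab d\<gamma> unit plane n s0I ne that] by (simp add: inner_commute)
  qed
  moreover have "\<gamma>' s0 \<bullet> \<gamma>' s0 = 1" using unit[OF s0I] by (simp add: dot_square_norm)
  moreover have "\<kappa> * \<bar>t - s0\<bar> < 1"
  proof (cases "\<kappa> = 0")
    case False
    have "\<bar>t - s0\<bar> < b - a" using t s0 by auto
    then have "\<kappa> * \<bar>t - s0\<bar> < \<kappa> * (b - a)" using False \<kappa> by simp
    then show ?thesis using short by linarith
  qed simp
  ultimately show ?thesis
    using continuous_lower_bound_from_square[OF cont s0I _ \<kappa>] t by simp
qed

text \<open>The normal offset of the chord is the integral of \<open>\<gamma>' \<bullet> n = O(\<kappa> \<bar>t - s\<^sub>0\<bar>)\<close>, and its length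
  is at least the integral of \<open>\<gamma>' \<bullet> \<gamma>' s\<^sub>0 \<ge> 1 - \<kappa> \<bar>t - s\<^sub>0\<bar>\<close>.\<close>

lemma curve_chord_estimates:
  fixes \<gamma> \<gamma>' \<gamma>'' :: "real \<Rightarrow> real^3"
  assumes surf: "smooth_surface S" and cb: "curvature_bounded S \<kappa>" and \<kappa>: "\<kappa> \<ge> 0"
    and d\<gamma>: "\<And>t. t \<in> {a..b} \<Longrightarrow> (\<gamma> has_vector_derivative \<gamma>' t) (at t within {a..b})"
    and d\<gamma>': "\<And>t. t \<in> {a..b} \<Longrightarrow> (\<gamma>' has_vector_derivative \<gamma>'' t) (at t within {a..b})"
    and unit: "\<And>t. t \<in> {a..b} \<Longrightarrow> norm (\<gamma>' t) = 1"
    and ab: "a < b" and inS: "\<gamma> ` {a..b} \<subseteq> S"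
    and plane: "\<And>t. t \<in> {a..b} \<Longrightarrow> \<exists>u w. \<gamma> t = p + u *\<^sub>R n + w *\<^sub>R (q - p)"
    and ends: "{s0, s1} = {a, b}" "\<gamma> s0 = p" "\<gamma> s1 = q"
    and n: "unit_normal S p n" and short: "\<kappa> * (b - a) \<le> 1"
  shows "\<bar>(p - q) \<bullet> n\<bar> \<le> \<kappa> * (b - a)\<^sup>2 / 2" and "b - a \<le> 2 * norm (p - q)"
proof -
  have "s0 \<in> {a, b}" using ends(1) by blast
  then have s0: "s0 \<in> {a, b}" "s0 \<in> {a..b}" using ab by auto
  have chord: "p - q = \<gamma> b - \<gamma> a \<or> p - q = - (\<gamma> b - \<gamma> a)"
    using ends ab by (auto simp: doubleton_eq_iff)
  have normal_dev: "\<bar>\<gamma>' t \<bullet> n\<bar> \<le> \<kappa> * \<bar>t - s0\<bar>" if "t \<in> {a..b}" for t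
    using curve_tangent_normal_component_le[OF surf cb \<kappa> d\<gamma> unit ab inS s0(2) _ that] n ends(2)
    by simp
  have n1: "norm n = 1" using n unfolding unit_normal_def by blast
  have increment: "c * (b - a) - \<kappa> * (b - a)\<^sup>2 / 2 \<le> l \<bullet> (\<gamma> b - \<gamma> a)"
    if "\<And>t. a < t \<Longrightarrow> t < b \<Longrightarrow> c - \<kappa> * \<bar>t - s0\<bar> \<le> l \<bullet> \<gamma>' t" for l c
    using increment_lower_bound_from_endpoint[OF less_imp_le[OF ab] s0(1)
        has_vector_derivative_inner_right[OF d\<gamma>, unfolded has_real_derivative_iff_has_vector_derivative[symmetric]]
        that]
    by (simp add: inner_diff_right)
  have "(b - a) - \<kappa> * (b - a)\<^sup>2 / 2 \<le> \<gamma>' s0 \<bullet> (\<gamma> b - \<gamma> a)"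
    using increment[where c=1]
      planar_curve_tangent_lower_bound[OF d\<gamma> d\<gamma>' unit plane n1 s0(1) normal_dev \<kappa> short] by simp
  moreover have "\<gamma>' s0 \<bullet> (\<gamma> b - \<gamma> a) \<le> norm (\<gamma> b - \<gamma> a)"
    using Cauchy_Schwarz_ineq2[of "\<gamma>' s0" "\<gamma> b - \<gamma> a"] unit[OF s0(2)] by simp
  moreover have "norm (\<gamma> b - \<gamma> a) = norm (p - q)" using chord by (metis norm_minus_cancel)
  moreover have "\<kappa> * (b - a)\<^sup>2 \<le> b - a"
    using mult_right_mono[OF short, of "b - a"] ab by (simp add: power2_eq_square algebra_simps)
  ultimately show "b - a \<le> 2 * norm (p - q)" by linarith
  have offset_lb: "- (\<kappa> * (b - a)\<^sup>2 / 2) \<le> l \<bullet> (\<gamma> b - \<gamma> a)" if l: "l = n \<or> l = - n" for l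
  proof (rule increment[where c=0, simplified])
    fix t assume "a < t" "t < b"
    then have "\<bar>\<gamma>' t \<bullet> n\<bar> \<le> \<kappa> * \<bar>t - s0\<bar>" using normal_dev by simp
    then show "- (\<kappa> * \<bar>t - s0\<bar>) \<le> l \<bullet> \<gamma>' t" using l by (auto simp: abs_le_iff inner_commute)
  qed
  have "\<bar>n \<bullet> (\<gamma> b - \<gamma> a)\<bar> \<le> \<kappa> * (b - a)\<^sup>2 / 2"
    using offset_lb[of n] offset_lb[of "- n"] by (simp add: abs_le_iff)
  moreover have "(p - q) \<bullet> n = n \<bullet> (\<gamma> b - \<gamma> a) \<or> (p - q) \<bullet> n = - (n \<bullet> (\<gamma> b - \<gamma> a))"
    using chord by (metis inner_commute inner_minus_right)
  ultimately show "\<bar>(p - q) \<bullet> n\<bar> \<le> \<kappa> * (b - a)\<^sup>2 / 2" by auto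
qed

lemma arc_hyp_normal_offset_le:
  assumes surf: "smooth_surface S" and cb: "curvature_bounded S \<kappa>" and \<kappa>: "\<kappa> \<ge> 0"
    and n: "unit_normal S p n" and arc: "arc_hyp S \<kappa> p q n"
  shows "\<bar>(p - q) \<bullet> n\<bar> \<le> 2 * \<kappa> * (norm (p - q))\<^sup>2"
proof -
  obtain \<gamma> :: "real \<Rightarrow> real^3" and \<gamma>' \<gamma>'' si sj where
    H: "\<forall>t\<in>{min si sj .. max si sj}.
          (\<gamma> has_vector_derivative \<gamma>' t) (at t within {min si sj .. max si sj}) \<and>
          (\<gamma>' has_vector_derivative \<gamma>'' t) (at t within {min si sj .. max si sj}) \<and>
          norm (\<gamma>' t) = 1"
    and img: "\<gamma> ` {min si sj .. max si sj} \<subseteq> S \<inter> {p + u *\<^sub>R n + w *\<^sub>R (q - p) | u w. True}"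
    and ends: "\<gamma> si = p" "\<gamma> sj = q" and short: "\<kappa> * \<bar>si - sj\<bar> \<le> 1"
    using arc unfolding arc_hyp_def Let_def by blast
  show ?thesis
  proof (cases "si = sj")
    case True
    then show ?thesis using ends by simp
  next
    case False
    define a b where "a = min si sj" and "b = max si sj"
    have ab: "a < b" and L: "b - a = \<bar>si - sj\<bar>" and "{si, sj} = {a, b}"
      using False by (auto simp: a_def b_def)
    have I: "{min si sj .. max si sj} = {a..b}" by (simp add: a_def b_def)
    have "\<And>t. t \<in> {a..b} \<Longrightarrow> (\<gamma> has_vector_derivative \<gamma>' t) (at t within {a..b})"
      "\<And>t. t \<in> {a..b} \<Longrightarrow> (\<gamma>' has_vector_derivative \<gamma>'' t) (at t within {a..b})"
      "\<And>t. t \<in> {a..b} \<Longrightarrow> norm (\<gamma>' t) = 1"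
      "\<gamma> ` {a..b} \<subseteq> S" "\<And>t. t \<in> {a..b} \<Longrightarrow> \<exists>u w. \<gamma> t = p + u *\<^sub>R n + w *\<^sub>R (q - p)"
      using H img unfolding I by blast+
    note est = curve_chord_estimates[OF surf cb \<kappa> this(1-3) ab this(4-5) \<open>{si, sj} = {a, b}\<close> ends n]
    have chord: "b - a \<le> 2 * norm (p - q)" using est(2) short L by simp
    have "\<bar>(p - q) \<bullet> n\<bar> \<le> \<kappa> * (b - a)\<^sup>2 / 2" using est(1) short L by simp
    also have "\<kappa> * (b - a)\<^sup>2 / 2 \<le> \<kappa> * (2 * norm (p - q))\<^sup>2 / 2"
      using chord ab \<kappa> by (intro divide_right_mono mult_left_mono power_mono) auto
    finally show ?thesis by (simp add: power2_eq_square)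
  qed
qed

section \<open>Nearest-point matching\<close>

lemma norm_diff_le_twice_if_nearer:
  fixes u p q :: "'a::real_normed_vector"
  assumes "norm (u - q) \<le> norm (u - p)"
  shows "norm (p - q) \<le> 2 * norm (u - p)"
  using norm_triangle_ineq4[of "u - q" "u - p"] assms by (simp add: norm_minus_commute)

lemma nearest_point_normal_offset_le:
  assumes "smooth_surface S" "curvature_bounded S \<kappa>" "\<kappa> \<ge> 0"
    and "unit_normal S p n" "arc_hyp S \<kappa> p q n"
    and nearer: "norm (p + d - q) \<le> norm d"
  shows "\<bar>(p - q) \<bullet> n\<bar> \<le> 8 * \<kappa> * (norm d)\<^sup>2"
proof -
  have "norm (p - q) \<le> 2 * norm d"
    using norm_diff_le_twice_if_nearer[of "p + d" q p] nearer by simp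
  then have "2 * \<kappa> * (norm (p - q))\<^sup>2 \<le> 2 * \<kappa> * (2 * norm d)\<^sup>2"
    using \<open>\<kappa> \<ge> 0\<close> by (intro mult_left_mono power_mono) auto
  then show ?thesis
    using arc_hyp_normal_offset_le[OF assms(1-5)] by (simp add: power2_eq_square)
qed

lemma abs_square_add_diff_le:
  fixes u \<psi> D E :: real
  assumes "\<bar>u\<bar> \<le> D" "\<bar>\<psi>\<bar> \<le> E"
  shows "\<bar>(u + \<psi>)\<^sup>2 - u\<^sup>2\<bar> \<le> 2 * D * E + E\<^sup>2"
proof -
  have "\<bar>(u + \<psi>)\<^sup>2 - u\<^sup>2\<bar> \<le> 2 * \<bar>u\<bar> * \<bar>\<psi>\<bar> + \<bar>\<psi>\<bar>\<^sup>2"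
    using abs_triangle_ineq[of "2 * u * \<psi>" "\<psi>\<^sup>2"] by (simp add: power2_eq_square algebra_simps abs_mult)
  also have "\<dots> \<le> 2 * D * E + E\<^sup>2"
    using assms by (intro add_mono mult_mono power_mono) auto
  finally show ?thesis .
qed

unbundle no cross3_syntax

theorem mainTheorem4:
  fixes Ss :: "(real^3) set set" and \<kappa> :: real and N :: nat
    and a n :: "nat \<Rightarrow> real^3" and \<pi> :: "(real^3) \<times> (real^3) \<Rightarrow> nat \<Rightarrow> nat"
    and x :: "(real^3) \<times> (real^3)"
  assumes kappa: "\<kappa> \<ge> 0"
    and fin: "finite Ss" and disj: "disjoint Ss"
    and surf: "\<forall>S\<in>Ss. smooth_surface S \<and> curvature_bounded S \<kappa>"
    and on_surf: "\<forall>i\<in>{1..N}. a i \<in> \<Union>Ss"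
    and distinct: "inj_on a {1..N}"
    and normals: "\<forall>i\<in>{1..N}. \<forall>S\<in>Ss. a i \<in> S \<longrightarrow> unit_normal S (a i) (n i)"
    and pi_min: "\<forall>y. \<forall>i\<in>{1..N}. \<pi> y i \<in> {1..N} \<and>
        (\<forall>k\<in>{1..N}. norm (a i + icp_d y (a i) - a (\<pi> y i)) \<le> norm (a i + icp_d y (a i) - a k))"
  shows "(\<forall>i\<in>{1..N}.
            (\<exists>S\<in>Ss. a i \<in> S \<and> a (\<pi> x i) \<in> S \<and> arc_hyp S \<kappa> (a i) (a (\<pi> x i)) (n i)) \<longrightarrow>
            (a i + icp_d x (a i) - a (\<pi> x i)) \<bullet> n i = icp_d x (a i) \<bullet> n i + (a i - a (\<pi> x i)) \<bullet> n i \<and>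
            \<bar>(a i - a (\<pi> x i)) \<bullet> n i\<bar> \<le> 8 * \<kappa> * (norm (icp_d x (a i)))\<^sup>2)
       \<and>
         ((\<forall>i\<in>{1..N}.
            \<exists>S\<in>Ss. a i \<in> S \<and> a (\<pi> x i) \<in> S \<and> arc_hyp S \<kappa> (a i) (a (\<pi> x i)) (n i)) \<longrightarrow>
          \<bar>J_ICP N a n \<pi> x - J_fix N a n x\<bar>
            \<le> (\<Sum>i=1..N. 16 * \<kappa> * norm (icp_d x (a i)) ^ 3 + 64 * \<kappa>\<^sup>2 * norm (icp_d x (a i)) ^ 4))"
    (is "(\<forall>i\<in>_. ?hyp i \<longrightarrow> ?split i \<and> ?offset i) \<and> _")
proof -
  let ?d = "\<lambda>i. icp_d x (a i)"
  have split: "?split i" for i by (simp add: inner_diff_left inner_add_left)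
  have offset: "?offset i" and unit: "norm (n i) = 1" if i: "i \<in> {1..N}" and hyp: "?hyp i" for i
  proof -
    obtain S where S: "S \<in> Ss" "a i \<in> S" "arc_hyp S \<kappa> (a i) (a (\<pi> x i)) (n i)" using hyp by blast
    have un: "unit_normal S (a i) (n i)" using normals i S by blast
    then show "norm (n i) = 1" unfolding unit_normal_def by blast
    show "?offset i"
      using nearest_point_normal_offset_le[OF _ _ kappa un S(3)] surf S(1) pi_min i by fastforce
  qed
  have "\<bar>((a i + ?d i - a (\<pi> x i)) \<bullet> n i)\<^sup>2 - (?d i \<bullet> n i)\<^sup>2\<bar>
      \<le> 16 * \<kappa> * norm (?d i) ^ 3 + 64 * \<kappa>\<^sup>2 * norm (?d i) ^ 4" if "i \<in> {1..N}" "?hyp i" for i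
  proof -
    have "\<bar>?d i \<bullet> n i\<bar> \<le> norm (?d i)" using Cauchy_Schwarz_ineq2[of "?d i" "n i"] unit[OF that] by simp
    from abs_square_add_diff_le[OF this offset[OF that]] show ?thesis
      unfolding split by (simp add: power2_eq_square power3_eq_cube power4_eq_xxxx algebra_simps)
  qed
  then have "\<forall>i\<in>{1..N}. ?hyp i \<Longrightarrow> \<bar>J_ICP N a n \<pi> x - J_fix N a n x\<bar>
      \<le> (\<Sum>i=1..N. 16 * \<kappa> * norm (?d i) ^ 3 + 64 * \<kappa>\<^sup>2 * norm (?d i) ^ 4)"
    unfolding J_ICP_def J_fix_def sum_subtractf[symmetric]
    by (intro order_trans[OF sum_abs] sum_mono) blast
  then show ?thesis using split offset by blast
qed

end
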